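(* Let $n$ be an odd prime and let $k_1,k_2\in\mathbb{Z}$ be such that $\sin\big(\frac{k_2\pi}{n}\big)\neq0$. Then $$\frac{\sin\big(\frac{k_1\pi}{n}\big)}{\sin\big(\frac{k_2\pi}{n}\big)}$$ is either $-1$, $0$, $1$, or irrational. *)

theory Defs
  imports "HOL-Analysis.Analysis"
begin

end

(* Suppose x = sin(k1 pi/n) / sin(k2 pi/n) is rational. With sin^2 t = (1 - cos 2t)/2 and
   2 cos(2 a pi/n) = w^a + w^(n-a) for w = cis(2 pi/n), the identity
   sin^2(k1 pi/n) = x^2 sin^2(k2 pi/n) becomes a rational linear relation among 1, w, ..., w^(n-1).
   Since 1 + X + ... + X^(n-1) is irreducible over Q (Eisenstein at n after X := X + 1, then Gauss's
   lemma), all coefficients of such a relation coincide. Unless the two cosines are equal (x = +-1)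
   or the first sine vanishes (x = 0), comparing the coefficients of w^a and w^b gives x^2 = -1. *)
theory Submission
  imports Defs "Berlekamp_Zassenhaus.Factor_Bound"
begin

(* The AFP import brings HOL-Algebra's univariate polynomials, whose constants shadow these names. *)
hide_const (open) up_ring.coeff up_ring.monom

lemma eisenstein_factor_degree_ge:
  fixes F G H :: "'a :: idom poly"
  assumes q: "prime_elem q" and FGH: "F = G * H"
    and G0: "q dvd coeff G 0" and H0: "\<not> q dvd coeff H 0"
    and lead_G: "\<not> q dvd lead_coeff G"
    and low: "\<forall>k < degree F. q dvd coeff F k"
  shows "degree F \<le> degree G"
proof (rule ccontr)
  assume "\<not> degree F \<le> degree G"
  define i where "i = (LEAST i. \<not> q dvd coeff G i)"
  have "\<not> q dvd coeff G (degree G)" using lead_G by simp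
  then have i_ndvd: "\<not> q dvd coeff G i" and "i \<le> degree G"
    unfolding i_def by (rule LeastI, rule Least_le)
  then have F_i: "q dvd coeff F i" using low \<open>\<not> degree F \<le> degree G\<close> by simp
  have below: "q dvd (\<Sum>j<i. coeff G j * coeff H (i - j))"
    by (intro dvd_sum dvd_mult2) (use not_less_Least i_def in blast)
  have "coeff F i = (\<Sum>j<i. coeff G j * coeff H (i - j)) + coeff G i * coeff H 0"
    unfolding FGH coeff_mult by (simp add: lessThan_Suc_atMost[symmetric])
  then have "q dvd coeff G i * coeff H 0" using F_i below by (metis dvd_add_right_iff)
  then show False using q i_ndvd H0 by (simp add: prime_elem_dvd_mult_iff)
qed

lemma eisenstein_criterion:
  fixes F G H :: "'a :: idom poly"
  assumes q: "prime_elem q" and FGH: "F = G * H"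
    and lead: "\<not> q dvd lead_coeff F"
    and low: "\<forall>k < degree F. q dvd coeff F k"
    and const: "\<not> q^2 dvd coeff F 0"
  shows "degree G = 0 \<or> degree H = 0"
proof (rule ccontr)
  assume "\<not> (degree G = 0 \<or> degree H = 0)"
  then have deg_F: "degree F = degree G + degree H" "degree G > 0" "degree H > 0"
    using FGH by (auto intro: degree_mult_eq)
  have "lead_coeff F = lead_coeff G * lead_coeff H" by (simp add: FGH lead_coeff_mult)
  then have lead_G: "\<not> q dvd lead_coeff G" and lead_H: "\<not> q dvd lead_coeff H"
    using lead by auto
  have F0: "coeff F 0 = coeff G 0 * coeff H 0" by (simp add: FGH coeff_mult_0)
  have "q dvd coeff F 0" using low deg_F by auto
  then consider "q dvd coeff G 0" "\<not> q dvd coeff H 0" | "q dvd coeff H 0" "\<not> q dvd coeff G 0"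
    using q const F0 by (metis mult_dvd_mono power2_eq_square prime_elem_dvd_mult_iff)
  then show False
  proof cases
    case 1
    then show False using eisenstein_factor_degree_ge[OF q FGH _ _ lead_G low] deg_F by simp
  next
    case 2
    then show False using eisenstein_factor_degree_ge[OF q _ _ _ lead_H low, of G] FGH deg_F
      by (simp add: mult.commute)
  qed
qed

definition prime_cyclotomic_poly :: "nat \<Rightarrow> 'a :: comm_semiring_1 poly" where
  "prime_cyclotomic_poly p = (\<Sum>k<p. monom 1 k)"

lemma coeff_prime_cyclotomic_poly:
  "coeff (prime_cyclotomic_poly p) i = (if i < p then 1 else 0)"
  by (simp add: prime_cyclotomic_poly_def coeff_sum)

lemma degree_prime_cyclotomic_poly:
  assumes "p > 0"
  shows "degree (prime_cyclotomic_poly p :: 'a :: comm_semiring_1 poly) = p - 1"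
  using assms by (intro antisym degree_le le_degree) (auto simp: coeff_prime_cyclotomic_poly)

lemma poly_prime_cyclotomic_poly: "poly (prime_cyclotomic_poly p) x = (\<Sum>k<p. x ^ k)"
  by (simp add: prime_cyclotomic_poly_def poly_sum poly_monom)

lemma map_poly_prime_cyclotomic_poly:
  assumes "f 0 = 0" "f 1 = 1"
  shows "map_poly f (prime_cyclotomic_poly p) = prime_cyclotomic_poly p"
  using assms by (intro poly_eqI) (simp add: coeff_map_poly coeff_prime_cyclotomic_poly)

lemma X_minus_one_times_prime_cyclotomic_poly:
  "[:-1, 1:] * prime_cyclotomic_poly p = (monom 1 p - 1 :: 'a :: comm_ring_1 poly)"
proof -
  have "[:-1, 1:] * monom 1 k = monom (1 :: 'a) (Suc k) - monom 1 k" for k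
    by (simp add: monom_Suc)
  then show ?thesis
    by (simp add: prime_cyclotomic_poly_def sum_distrib_left sum_lessThan_telescope)
qed

lemma prime_cyclotomic_poly_shift:
  "pCons 0 (prime_cyclotomic_poly p \<circ>\<^sub>p [:1, 1:]) = ([:1, 1:] ^ p - 1 :: 'a :: comm_ring_1 poly)"
proof -
  have "pCons 0 (prime_cyclotomic_poly p \<circ>\<^sub>p [:1, 1:])
      = ([:-1, 1:] \<circ>\<^sub>p [:1, 1:]) * (prime_cyclotomic_poly p \<circ>\<^sub>p [:1, 1 :: 'a:])"
    by (simp add: pcompose_pCons)
  also have "\<dots> = (monom 1 p - 1) \<circ>\<^sub>p [:1, 1:]"
    by (simp only: pcompose_mult[symmetric] X_minus_one_times_prime_cyclotomic_poly)
  also have "\<dots> = [:1, 1:] ^ p - 1"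
  proof -
    have "monom 1 n \<circ>\<^sub>p q = q ^ n" for n and q :: "'a poly"
      by (induction n) (simp_all add: monom_Suc pcompose_pCons)
    then show ?thesis by (simp add: pcompose_diff pcompose_1)
  qed
  finally show ?thesis .
qed

lemma coeff_prime_cyclotomic_poly_shift:
  assumes "k < p"
  shows "coeff (prime_cyclotomic_poly p \<circ>\<^sub>p [:1, 1:]) k = (of_nat (p choose Suc k) :: 'a :: comm_ring_1)"
proof -
  have "coeff (prime_cyclotomic_poly p \<circ>\<^sub>p [:1, 1 :: 'a:]) k
      = coeff (pCons 0 (prime_cyclotomic_poly p \<circ>\<^sub>p [:1, 1:])) (Suc k)"
    by simp
  also have "\<dots> = of_nat (p choose Suc k)"
    unfolding prime_cyclotomic_poly_shift coeff_diff
    using assms by (simp add: coeff_linear_poly_power del: pCons_one)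
  finally show ?thesis .
qed

lemma prime_cyclotomic_poly_int_factor:
  fixes G H :: "int poly"
  assumes p: "prime p" and factor: "prime_cyclotomic_poly p = G * H"
  shows "degree G = 0 \<or> degree H = 0"
proof -
  define F :: "int poly" where "F = prime_cyclotomic_poly p \<circ>\<^sub>p [:1, 1:]"
  have "p > 1" using p by (rule prime_gt_1_nat)
  have deg_F: "degree F = p - 1"
    using \<open>p > 1\<close> by (simp add: F_def degree_pcompose degree_prime_cyclotomic_poly)
  have coeff_F: "coeff F k = int (p choose Suc k)" if "k < p" for k
    unfolding F_def using coeff_prime_cyclotomic_poly_shift[OF that, where 'a = int] by simp
  have "degree (G \<circ>\<^sub>p [:1, 1:]) = 0 \<or> degree (H \<circ>\<^sub>p [:1, 1:]) = 0"
  proof (rule eisenstein_criterion)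
    show "prime_elem (int p)" using p by simp
    show "F = (G \<circ>\<^sub>p [:1, 1:]) * (H \<circ>\<^sub>p [:1, 1:])"
      by (simp add: F_def factor pcompose_mult)
    show "\<not> int p dvd lead_coeff F"
      using p \<open>p > 1\<close> by (simp add: deg_F coeff_F)
    show "\<forall>k < degree F. int p dvd coeff F k"
      using p by (auto simp: deg_F coeff_F intro: dvd_choose_prime)
    show "\<not> (int p)^2 dvd coeff F 0"
      using p \<open>p > 1\<close> by (simp add: coeff_F power2_eq_square)
  qed
  then show ?thesis by (simp add: degree_pcompose)
qed

lemma prime_cyclotomic_poly_rat_factor:
  fixes G H :: "rat poly"
  assumes p: "prime p" and factor: "prime_cyclotomic_poly p = G * H"
  shows "degree G = 0 \<or> degree H = 0"
proof -
  have "map_poly rat_of_int (prime_cyclotomic_poly p) = G * H"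
    by (simp add: map_poly_prime_cyclotomic_poly factor)
  then obtain G' H' :: "int poly" where "prime_cyclotomic_poly p = G' * H'"
    and "degree G' = degree G" "degree H' = degree H"
    by (blast dest: rat_to_int_factor)
  with prime_cyclotomic_poly_int_factor[OF p] show ?thesis by metis
qed

lemma cis_2pi_div_pow: "cis (2 * pi / real n) ^ n = 1" if "n > 0"
  using that by (simp add: Complex.DeMoivre)

lemma cis_2pi_div_neq_1:
  assumes "n > 1"
  shows "cis (2 * pi / real n) \<noteq> 1"
proof -
  have "inj_on (\<lambda>k. cis (2 * pi * real k / real n)) {..<n}"
    using Complex.bij_betw_roots_unity[of n] assms by (simp add: bij_betw_def)
  from inj_onD[OF this, of 1 0] assms show ?thesis by auto
qed

lemma poly_prime_cyclotomic_poly_cis: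
  assumes "p > 1"
  shows "poly (prime_cyclotomic_poly p) (cis (2 * pi / real p)) = 0"
proof -
  let ?\<omega> = "cis (2 * pi / real p)"
  have "(?\<omega> - 1) * poly (prime_cyclotomic_poly p) ?\<omega> = ?\<omega> ^ p - 1"
    by (simp add: poly_prime_cyclotomic_poly power_diff_1_eq)
  also have "\<dots> = 0" using assms by (simp add: cis_2pi_div_pow)
  finally show ?thesis using cis_2pi_div_neq_1[OF assms] by simp
qed

lemma degree_rat_poly_root_cis_ge:
  fixes f :: "rat poly"
  assumes p: "prime p" and "f \<noteq> 0"
    and root: "poly (map_poly of_rat f) (cis (2 * pi / real p)) = 0"
  shows "p - 1 \<le> degree f"
proof -
  interpret of_rat_poly: map_poly_idom_hom "of_rat :: rat \<Rightarrow> complex" ..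
  let ?\<omega> = "cis (2 * pi / real p)" and ?\<Phi> = "prime_cyclotomic_poly p :: rat poly"
  have "p > 1" using p by (rule prime_gt_1_nat)
  define g where "g = gcd f ?\<Phi>"
  obtain u v where bezout: "u * f + v * ?\<Phi> = g"
    unfolding g_def using bezout_coefficients_fst_snd by blast
  have "poly (map_poly of_rat ?\<Phi>) ?\<omega> = 0"
    using \<open>p > 1\<close> by (simp add: map_poly_prime_cyclotomic_poly poly_prime_cyclotomic_poly_cis)
  then have g_root: "poly (map_poly of_rat g) ?\<omega> = 0"
    unfolding bezout[symmetric] using root by (simp add: hom_distribs)
  have "g \<noteq> 0" using \<open>f \<noteq> 0\<close> by (simp add: g_def)
  have "degree g \<noteq> 0"
  proof
    assume "degree g = 0"
    then obtain a where "g = [:a:]" by (rule degree_eq_zeroE)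
    with g_root \<open>g \<noteq> 0\<close> show False by simp
  qed
  obtain h where \<Phi>_gh: "?\<Phi> = g * h" unfolding g_def by (meson gcd_dvd2 dvd_def)
  then have "degree h = 0"
    using prime_cyclotomic_poly_rat_factor[OF p \<Phi>_gh] \<open>degree g \<noteq> 0\<close> by simp
  have "p - 1 = degree ?\<Phi>" using \<open>p > 1\<close> by (simp add: degree_prime_cyclotomic_poly)
  also have "\<dots> \<le> degree g + degree h" unfolding \<Phi>_gh by (rule degree_mult_le)
  also have "\<dots> = degree g" using \<open>degree h = 0\<close> by simp
  also have "\<dots> \<le> degree f"
    using \<open>f \<noteq> 0\<close> by (simp add: g_def dvd_imp_degree_le)
  finally show ?thesis .
qed

lemma rat_combination_cis_powers_eq_0_imp_coeffs_eq:
  fixes c :: "nat \<Rightarrow> rat"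
  assumes p: "prime p"
    and comb: "(\<Sum>j<p. of_rat (c j) * cis (2 * pi / real p) ^ j) = (0 :: complex)"
    and "i < p" "j < p"
  shows "c i = c j"
proof -
  interpret of_rat_poly: map_poly_idom_hom "of_rat :: rat \<Rightarrow> complex" ..
  let ?\<omega> = "cis (2 * pi / real p)"
  have "p > 1" using p by (rule prime_gt_1_nat)
  define d where "d k = c k - c (p - 1)" for k
  define f where "f = (\<Sum>k<p - 1. monom (d k) k)"
  have coeff_f: "coeff f k = (if k < p - 1 then d k else 0)" for k
    by (simp add: f_def coeff_sum)
  have "degree f \<le> p - 2" by (rule degree_le) (use coeff_f in auto)
  then have small_degree: "degree f < p - 1" using \<open>p > 1\<close> by linarith
  have "poly (map_poly of_rat f) ?\<omega> = (\<Sum>k<p - 1. of_rat (d k) * ?\<omega> ^ k)"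
    by (simp add: f_def of_rat_poly.hom_sum of_rat_hom.map_poly_hom_monom poly_sum poly_monom)
  also have "\<dots> = (\<Sum>k<p. of_rat (d k) * ?\<omega> ^ k)"
    using sum.lessThan_Suc[of "\<lambda>k. of_rat (d k) * ?\<omega> ^ k" "p - 1"] \<open>p > 1\<close> by (simp add: d_def)
  also have "\<dots> = (\<Sum>k<p. of_rat (c k) * ?\<omega> ^ k) - of_rat (c (p - 1)) * poly (prime_cyclotomic_poly p) ?\<omega>"
    by (simp add: d_def poly_prime_cyclotomic_poly of_rat_diff left_diff_distrib sum_subtractf sum_distrib_left)
  also have "\<dots> = 0"
    using comb poly_prime_cyclotomic_poly_cis[OF \<open>p > 1\<close>] by simp
  finally have root: "poly (map_poly of_rat f) ?\<omega> = 0" .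
  have "f = 0" using small_degree degree_rat_poly_root_cis_ge[OF p _ root] by (meson leD)
  have "c k = c (p - 1)" if "k < p" for k
  proof (cases "k < p - 1")
    case True
    then show ?thesis using coeff_f[of k] \<open>f = 0\<close> by (simp add: d_def)
  next
    case False
    with that have "k = p - 1" by linarith
    then show ?thesis by simp
  qed
  then show ?thesis using \<open>i < p\<close> \<open>j < p\<close> by metis
qed

lemma cis_pow_add_cis_pow_complement:
  assumes "n > 0" "a \<le> n"
  shows "cis (2 * pi / real n) ^ a + cis (2 * pi / real n) ^ (n - a)
         = complex_of_real (2 * cos (2 * real a * pi / real n))"
proof -
  define t where "t = 2 * real a * pi / real n"
  have "real (n - a) * (2 * pi / real n) = 2 * pi - t"
    using assms by (simp add: t_def of_nat_diff field_simps)
  then have "cis (2 * pi / real n) ^ (n - a) = cis (- t)"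
    by (simp add: Complex.DeMoivre complex_eq_iff)
  moreover have "cis (2 * pi / real n) ^ a = cis t"
    by (simp add: Complex.DeMoivre t_def field_simps)
  ultimately show ?thesis by (simp add: t_def complex_eq_iff)
qed

lemma cos_2pi_div_complement:
  assumes "m \<le> n"
  shows "cos (2 * real (n - m) * pi / real n) = cos (2 * real m * pi / real n)"
proof (cases "n = 0")
  case False
  then have "2 * real (n - m) * pi / real n = 2 * pi - 2 * real m * pi / real n"
    using assms by (simp add: of_nat_diff field_simps)
  then show ?thesis by simp
qed (use assms in simp)

lemma sin_sq_eq_cos_mod:
  fixes k :: int
  assumes "n > 0"
  shows "sin (of_int k * pi / real n) ^ 2 = (1 - cos (2 * real (nat (k mod int n)) * pi / real n)) / 2"
proof -
  have "real_of_int k = real_of_int (k mod int n) + real n * real_of_int (k div int n)"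
    by (metis mod_div_mult_eq of_int_add of_int_mult of_int_of_nat_eq mult.commute)
  then have "2 * of_int k * pi / real n = 2 * real (nat (k mod int n)) * pi / real n + 2 * pi * of_int (k div int n)"
    using assms by (simp add: field_simps)
  then have "cos (2 * of_int k * pi / real n) = cos (2 * real (nat (k mod int n)) * pi / real n)"
    by (simp add: cos_add)
  moreover have "cos (2 * of_int k * pi / real n) = 1 - 2 * sin (of_int k * pi / real n) ^ 2"
    using cos_double_sin[of "of_int k * pi / real n"] by (simp add: mult.assoc)
  ultimately show ?thesis by simp
qed

lemma of_real_of_rat: "of_real (of_rat q) = (of_rat q :: 'a :: real_field)"
  by (cases q) (simp add: of_rat_rat)

lemma rat_relation_cos_2pi_div_prime:
  fixes u r s :: rat
  assumes p: "prime p" "odd p"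
    and a: "0 < a" "a < p" and b: "0 < b" "b < p" and "a \<noteq> b" "a + b \<noteq> p"
    and rel: "of_rat u + of_rat r * cos (2 * real a * pi / real p)
              + of_rat s * cos (2 * real b * pi / real p) = 0"
  shows "r = s"
proof -
  let ?\<omega> = "cis (2 * pi / real p)"
  define c where "c j = (if j = 0 then 2 * u else 0) + (if j = a then r else 0)
    + (if j = p - a then r else 0) + (if j = b then s else 0) + (if j = p - b then s else 0)" for j
  have "a \<noteq> p - a" "b \<noteq> p - b" using p a b by presburger+
  have "of_rat (c j) * z = (if j = 0 then of_rat (2 * u) * z else 0)
      + (if j = a then of_rat r * z else 0) + (if j = p - a then of_rat r * z else 0)
      + (if j = b then of_rat s * z else 0) + (if j = p - b then of_rat s * z else 0)"
    for j and z :: complex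
    by (simp add: c_def of_rat_add ring_distribs)
  then have "(\<Sum>j<p. of_rat (c j) * ?\<omega> ^ j)
      = of_rat (2 * u) + of_rat r * (?\<omega> ^ a + ?\<omega> ^ (p - a)) + of_rat s * (?\<omega> ^ b + ?\<omega> ^ (p - b))"
    using a b by (simp add: sum.distrib ring_distribs)
  also have "\<dots> = complex_of_real (2 * (of_rat u + of_rat r * cos (2 * real a * pi / real p)
                    + of_rat s * cos (2 * real b * pi / real p)))"
    using a b by (simp add: cis_pow_add_cis_pow_complement of_real_of_rat of_rat_mult ring_distribs)
  also have "\<dots> = 0" using rel by simp
  finally have "c a = c b" using rat_combination_cis_powers_eq_0_imp_coeffs_eq[OF p(1)] a b by blast
  moreover have "c a = r" "c b = s"
    using a b \<open>a \<noteq> b\<close> \<open>a + b \<noteq> p\<close> \<open>a \<noteq> p - a\<close> \<open>b \<noteq> p - b\<close> by (auto simp: c_def)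
  ultimately show ?thesis by simp
qed

lemma sin_sq_ratio_rat_eq_1:
  fixes k1 k2 :: int and r :: rat
  assumes n: "prime n" "odd n"
    and s1: "sin (of_int k1 * pi / real n) \<noteq> 0" and s2: "sin (of_int k2 * pi / real n) \<noteq> 0"
    and ratio: "sin (of_int k1 * pi / real n) ^ 2 = of_rat r * sin (of_int k2 * pi / real n) ^ 2"
  shows "r = 1"
proof -
  have "n > 0" using n(1) by (rule prime_gt_0_nat)
  define a where "a = nat (k1 mod int n)"
  define b where "b = nat (k2 mod int n)"
  define C where "C m = cos (2 * real m * pi / real n)" for m
  have "a < n" "b < n" using \<open>n > 0\<close> by (simp_all add: a_def b_def nat_less_iff)
  have sq: "sin (of_int k1 * pi / real n) ^ 2 = (1 - C a) / 2"
    "sin (of_int k2 * pi / real n) ^ 2 = (1 - C b) / 2"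
    using sin_sq_eq_cos_mod[OF \<open>n > 0\<close>] by (simp_all add: a_def b_def C_def)
  then have "C a \<noteq> 1" "C b \<noteq> 1" using s1 s2 by auto
  moreover have "C 0 = 1" by (simp add: C_def)
  ultimately have "a \<noteq> 0" "b \<noteq> 0" by metis+
  have rel: "1 - C a = of_rat r * (1 - C b)" using ratio sq by simp
  show "r = 1"
  proof (cases "a = b \<or> a + b = n")
    case True
    then have "C a = C b"
      using cos_2pi_div_complement[of b n] \<open>b < n\<close> by (auto simp: C_def)
    then show ?thesis using rel \<open>C b \<noteq> 1\<close> by simp
  next
    case False
    have "of_rat (r - 1) + of_rat 1 * C a + of_rat (- r) * C b = 0"
      using rel by (simp add: of_rat_diff of_rat_minus algebra_simps)
    then have "1 = - r"
      using rat_relation_cos_2pi_div_prime[OF n] \<open>a < n\<close> \<open>b < n\<close> \<open>a \<noteq> 0\<close> \<open>b \<noteq> 0\<close> False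
      unfolding C_def by blast
    then have "sin (of_int k1 * pi / real n) ^ 2 + sin (of_int k2 * pi / real n) ^ 2 = 0"
      using ratio by simp
    then show ?thesis using s1 s2 by (simp add: sum_power2_eq_zero_iff)
  qed
qed

theorem corollary6:
  fixes n :: nat and k1 k2 :: int
  assumes "prime n" and "odd n"
    and "sin (real_of_int k2 * pi / real n) \<noteq> 0"
  shows "sin (real_of_int k1 * pi / real n) / sin (real_of_int k2 * pi / real n) \<in> {-1, 0, 1}
      \<or> sin (real_of_int k1 * pi / real n) / sin (real_of_int k2 * pi / real n) \<notin> \<rat>"
proof (rule disjCI)
  assume "\<not> sin (real_of_int k1 * pi / real n) / sin (real_of_int k2 * pi / real n) \<notin> \<rat>"
  then obtain q :: rat
    where q: "sin (real_of_int k1 * pi / real n) / sin (real_of_int k2 * pi / real n) = of_rat q"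
    by (auto elim: Rats_cases)
  show "sin (real_of_int k1 * pi / real n) / sin (real_of_int k2 * pi / real n) \<in> {-1, 0, 1}"
  proof (cases "sin (real_of_int k1 * pi / real n) = 0")
    case False
    have "sin (real_of_int k1 * pi / real n) ^ 2 = of_rat (q ^ 2) * sin (real_of_int k2 * pi / real n) ^ 2"
      using q assms(3) by (simp add: of_rat_power field_simps)
    then have "q ^ 2 = 1" using sin_sq_ratio_rat_eq_1 assms False by blast
    then show ?thesis using q by (auto simp: power2_eq_1_iff)
  qed simp
qed

end
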